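(* Under the standing assumptions, there are $\lambda_0>0$ and $C>0$ such that for all $0<\lambda<\lambda_0$, all $z\in\mathbb{C}$ with $\operatorname{Re}z\le\frac12(1-\frac1c)$, all $v\in L^2$ and all $u\in H^m(\mathbb{R})$ with $(\mathcal{A}^\lambda-z)u=v$, $$\|u\|_{H^{m/2}}\le C\big(\|u\|_{L^2_e}+\|v\|_{L^2}\big).$$
   Context: Standing assumptions: $f:\mathbb{R}\to\mathbb{R}$ is $C^1$ with $f(0)=f'(0)=0$. $\mathcal{M}$ is the Fourier multiplier with symbol $\alpha:\mathbb{R}\to[0,\infty)$, locally bounded, $a|k|^m\le\alpha(k)\le b|k|^m$ for all large $|k|$ ($m\ge1$, $a,b>0$). $c>1$ and $u_c\in H^m(\mathbb{R})$ is a real solution of $\mathcal{M}u_c+(1-\frac1c)u_c-\frac1cf(u_c)=0$ with $u_c(x)\to0$ as $|x|\to\infty$. With $\mathcal{E}^{\lambda,-}$ the Fourier multiplier with symbol $\frac{\lambda}{\lambda-ick}$, $\mathcal{A}^\lambda=\mathcal{M}+1-\frac1c(1-\mathcal{E}^{\lambda,-})(1+f'(u_c))$. Weighted norm: $e(x)=(f'(u_c(x)))^2$ and $\|u\|_{L^2_e}=(\int e(x)|u(x)|^2dx)^{1/2}$. *)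

theory Defs
  imports "HOL-Analysis.Analysis"
begin

definition is_L2 :: "(real \<Rightarrow> complex) \<Rightarrow> bool" where
  "is_L2 u \<longleftrightarrow> u \<in> borel_measurable lborel \<and> integrable lborel (\<lambda>x. (cmod (u x))\<^sup>2)"

definition L2_norm :: "(real \<Rightarrow> complex) \<Rightarrow> real" where
  "L2_norm u = sqrt (\<integral>x. (cmod (u x))\<^sup>2 \<partial>lborel)"

definition fourier_L1 :: "(real \<Rightarrow> complex) \<Rightarrow> real \<Rightarrow> complex" where
  "fourier_L1 \<phi> k = (\<integral>x. \<phi> x * exp (- (\<i> * complex_of_real (k * x))) \<partial>lborel)"

text \<open>\<open>fourier_L2 u g\<close>: \<open>g\<close> is (a representative of) the L^2 Fourier transform of \<open>u\<close>,
  characterised by the multiplication formula \<open>\<integral> g \<phi> = \<integral> u \<phi>^\<close> for all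
  \<open>\<phi> \<in> L^1 \<inter> L^2\<close> (this determines \<open>g\<close> almost everywhere).\<close>
definition fourier_L2 :: "(real \<Rightarrow> complex) \<Rightarrow> (real \<Rightarrow> complex) \<Rightarrow> bool" where
  "fourier_L2 u g \<longleftrightarrow> is_L2 u \<and> is_L2 g \<and>
     (\<forall>\<phi>. integrable lborel \<phi> \<and> is_L2 \<phi> \<longrightarrow>
        (\<integral>k. g k * \<phi> k \<partial>lborel) = (\<integral>x. u x * fourier_L1 \<phi> x \<partial>lborel))"

definition fourier :: "(real \<Rightarrow> complex) \<Rightarrow> real \<Rightarrow> complex" where
  "fourier u = (SOME g. fourier_L2 u g)"

definition sobolev :: "real \<Rightarrow> (real \<Rightarrow> complex) \<Rightarrow> bool" where
  "sobolev s u \<longleftrightarrow> (\<exists>g. fourier_L2 u g \<and>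
      integrable lborel (\<lambda>k. (1 + k\<^sup>2) powr s * (cmod (g k))\<^sup>2))"

definition sobolev_norm :: "real \<Rightarrow> (real \<Rightarrow> complex) \<Rightarrow> real" where
  "sobolev_norm s u = sqrt (\<integral>k. (1 + k\<^sup>2) powr s * (cmod (fourier u k))\<^sup>2 \<partial>lborel)"

definition L2e_norm :: "(real \<Rightarrow> real) \<Rightarrow> (real \<Rightarrow> real) \<Rightarrow> (real \<Rightarrow> complex) \<Rightarrow> real" where
  "L2e_norm f' uc u = sqrt (\<integral>x. (f' (uc x))\<^sup>2 * (cmod (u x))\<^sup>2 \<partial>lborel)"

text \<open>The profile equation \<open>M u_c + (1 - 1/c) u_c - (1/c) f(u_c) = 0\<close>, on the Fourier side.\<close>
definition profile_eq :: "(real \<Rightarrow> real) \<Rightarrow> real \<Rightarrow> (real \<Rightarrow> real) \<Rightarrow> (real \<Rightarrow> real) \<Rightarrow> bool" where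
  "profile_eq \<alpha> c f uc \<longleftrightarrow> (\<exists>g h.
      fourier_L2 (\<lambda>x. complex_of_real (uc x)) g \<and>
      fourier_L2 (\<lambda>x. complex_of_real (f (uc x))) h \<and>
      (AE k in lborel. complex_of_real (\<alpha> k) * g k + complex_of_real (1 - 1/c) * g k
                        - complex_of_real (1/c) * h k = 0))"

text \<open>\<open>(A^\<lambda> - z) u = v\<close> where
  \<open>A^\<lambda> = M + 1 - (1/c)(1 - E^{\<lambda>,-})(1 + f'(u_c))\<close>, \<open>E^{\<lambda>,-}\<close> having symbol \<open>\<lambda>/(\<lambda> - i c k)\<close>;
  stated on the Fourier side.\<close>
definition A_minus_z_eq ::
  "(real \<Rightarrow> real) \<Rightarrow> real \<Rightarrow> (real \<Rightarrow> real) \<Rightarrow> (real \<Rightarrow> real) \<Rightarrow> real \<Rightarrow> complex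
     \<Rightarrow> (real \<Rightarrow> complex) \<Rightarrow> (real \<Rightarrow> complex) \<Rightarrow> bool" where
  "A_minus_z_eq \<alpha> c f' uc lam z u v \<longleftrightarrow> (\<exists>gu gw gv.
      fourier_L2 u gu \<and>
      fourier_L2 (\<lambda>x. (1 + complex_of_real (f' (uc x))) * u x) gw \<and>
      fourier_L2 v gv \<and>
      (AE k in lborel. gv k =
          (complex_of_real (\<alpha> k) + 1 - z) * gu k
          - complex_of_real (1/c) *
              (1 - complex_of_real lam / (complex_of_real lam - \<i> * complex_of_real (c * k))) * gw k))"

end

theory Submission
  imports Defs "HOL-Probability.Probability"
begin

text \<open>
  On the Fourier side the equation
  \<open>(A^\<lambda> - z) u = v\<close> reads
    \<open>(\<alpha>(k) + 1 - z) u^(k) = v^(k) + (1/c) s(k) (u^(k) + q^(k))\<close>,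
  where \<open>s(k) = 1 - \<lambda>/(\<lambda> - ick)\<close> has modulus at most 1 and \<open>q = f'(u_c) u\<close>.
  Since \<open>Re (\<alpha> + 1 - z) \<ge> \<alpha> + \<delta> + 1/c\<close> with \<open>\<delta> = (1 - 1/c)/2\<close>, the term \<open>(1/c) u^\<close> is absorbed and
  \<open>(\<alpha> + \<delta>) |u^| \<le> |v^| + |q^|\<close> pointwise; as \<open>(1+k^2)^{m/2} \<lesssim> \<alpha>(k) + \<delta>\<close>, integrating gives
  \<open>\<parallel>u\<parallel>_{H^{m/2}}^2 \<lesssim> \<parallel>v^\<parallel>^2 + \<parallel>q^\<parallel>^2\<close>.  What remains is Plancherel: \<open>\<parallel>g\<parallel>_2^2 \<le> 2\<pi> \<parallel>h\<parallel>_2^2\<close>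
  whenever \<open>g\<close> is an L^2 Fourier transform of \<open>h\<close> (with \<open>\<parallel>q\<parallel>_2 = \<parallel>u\<parallel>_{L^2_e}\<close>).
\<close>

lemma is_L2_meas: "is_L2 u \<Longrightarrow> u \<in> borel_measurable borel"
  unfolding is_L2_def by simp

lemma is_L2_sq: "is_L2 u \<Longrightarrow> integrable lborel (\<lambda>x. (cmod (u x))\<^sup>2)"
  unfolding is_L2_def by simp

text \<open>The product of two L^2 functions is integrable (via \<open>|fg| \<le> |f|^2 + |g|^2\<close>).\<close>
lemma L2_prod_int:
  fixes f g :: "real \<Rightarrow> complex"
  assumes f: "is_L2 f" and g: "is_L2 g"
  shows "integrable lborel (\<lambda>x. f x * g x)"
proof (rule Bochner_Integration.integrable_bound)
  have [measurable]: "f \<in> borel_measurable borel" "g \<in> borel_measurable borel"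
    using f g by (auto dest: is_L2_meas)
  show "integrable lborel (\<lambda>x. (cmod (f x))\<^sup>2 + (cmod (g x))\<^sup>2)"
    using f g by (auto dest: is_L2_sq)
  show "(\<lambda>x. f x * g x) \<in> borel_measurable lborel" by simp
  show "AE x in lborel. norm (f x * g x) \<le> norm ((cmod (f x))\<^sup>2 + (cmod (g x))\<^sup>2)"
  proof (rule AE_I2)
    fix x
    have "2 * (cmod (f x) * cmod (g x)) \<le> (cmod (f x))\<^sup>2 + (cmod (g x))\<^sup>2"
      using sum_squares_bound[of "cmod (f x)" "cmod (g x)"] by (simp add: mult.assoc)
    moreover have "cmod (f x) * cmod (g x) \<ge> 0" by simp
    ultimately have "cmod (f x) * cmod (g x) \<le> (cmod (f x))\<^sup>2 + (cmod (g x))\<^sup>2" by linarith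
    then show "norm (f x * g x) \<le> norm ((cmod (f x))\<^sup>2 + (cmod (g x))\<^sup>2)"
      by (simp add: norm_mult)
  qed
qed

text \<open>L^2 is closed under differences (via \<open>|f - g|^2 \<le> 2 (|f|^2 + |g|^2)\<close>).\<close>
lemma L2_diff:
  fixes f g :: "real \<Rightarrow> complex"
  assumes f: "is_L2 f" and g: "is_L2 g"
  shows "is_L2 (\<lambda>x. f x - g x)"
  unfolding is_L2_def
proof
  have [measurable]: "f \<in> borel_measurable borel" "g \<in> borel_measurable borel"
    using f g by (auto dest: is_L2_meas)
  show "(\<lambda>x. f x - g x) \<in> borel_measurable lborel" by simp
  show "integrable lborel (\<lambda>x. (cmod (f x - g x))\<^sup>2)"
  proof (rule Bochner_Integration.integrable_bound)
    show "integrable lborel (\<lambda>x. 2 * ((cmod (f x))\<^sup>2 + (cmod (g x))\<^sup>2))"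
      using is_L2_sq[OF f] is_L2_sq[OF g]
      by (intro integrable_mult_right Bochner_Integration.integrable_add)
    show "(\<lambda>x. (cmod (f x - g x))\<^sup>2) \<in> borel_measurable lborel" by simp
    show "AE x in lborel. norm ((cmod (f x - g x))\<^sup>2) \<le> norm (2 * ((cmod (f x))\<^sup>2 + (cmod (g x))\<^sup>2))"
    proof (rule AE_I2)
      fix x
      have "(cmod (f x - g x))\<^sup>2 \<le> (cmod (f x) + cmod (g x))\<^sup>2"
        using norm_triangle_ineq4[of "f x" "g x"] by (intro power_mono) auto
      also have "\<dots> \<le> 2 * ((cmod (f x))\<^sup>2 + (cmod (g x))\<^sup>2)"
        using sum_squares_bound[of "cmod (f x)" "cmod (g x)"] by (simp add: power2_sum)
      finally show "norm ((cmod (f x - g x))\<^sup>2) \<le> norm (2 * ((cmod (f x))\<^sup>2 + (cmod (g x))\<^sup>2))"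
        by simp
    qed
  qed
qed

lemma borel_measurable_cnj'[measurable]:
  "f \<in> borel_measurable M \<Longrightarrow> (\<lambda>x. cnj (f x)) \<in> borel_measurable M"
  by (rule borel_measurable_continuous_on[where f=cnj]) (auto intro: continuous_intros)

lemma integrable_tensor_product:
  fixes f g :: "real \<Rightarrow> real"
  assumes f: "integrable lborel f" and g: "integrable lborel g"
  shows "integrable (lborel \<Otimes>\<^sub>M lborel) (\<lambda>(x,y). f x * g y)"
proof (rule lborel_pair.Fubini_integrable)
  have [measurable]: "f \<in> borel_measurable borel" "g \<in> borel_measurable borel"
    using f g by auto
  show "(\<lambda>(x,y). f x * g y) \<in> borel_measurable (lborel \<Otimes>\<^sub>M lborel)" by measurable
  show "integrable lborel (\<lambda>x. \<integral>y. norm (case (x,y) of (x,y) \<Rightarrow> f x * g y) \<partial>lborel)"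
    by (simp add: abs_mult f g integrable_abs)
  show "AE x in lborel. integrable lborel (\<lambda>y. case (x,y) of (x,y) \<Rightarrow> f x * g y)"
    using g by simp
qed

text \<open>\<open>|\<integral> f| \<le> \<integral>\<^sup>+ |f|\<close>, valid also when \<open>f\<close> is not integrable (both sides then trivialise).\<close>
lemma norm_integral_le_nn_integral:
  "ennreal (norm (integral\<^sup>L M f)) \<le> (\<integral>\<^sup>+x. norm (f x) \<partial>M)"
  by (cases "integrable M f") (auto simp: integral_norm_bound_ennreal not_integrable_integral_eq)

lemma schur_test_stochastic_kernel:
  fixes a :: "real \<Rightarrow> real" and K :: "real \<Rightarrow> real \<Rightarrow> real"
  assumes [measurable]: "a \<in> borel_measurable borel" "case_prod K \<in> borel_measurable (borel \<Otimes>\<^sub>M borel)"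
    and a_nonneg: "\<And>x. a x \<ge> 0" and K_nonneg: "\<And>x y. K x y \<ge> 0"
    and rows: "\<And>x. (\<integral>\<^sup>+y. ennreal (K x y) \<partial>lborel) = 1"
    and cols: "\<And>y. (\<integral>\<^sup>+x. ennreal (K x y) \<partial>lborel) = 1"
  shows "(\<integral>\<^sup>+x. (\<integral>\<^sup>+y. ennreal (a x * a y * K x y) \<partial>lborel) \<partial>lborel)
           \<le> (\<integral>\<^sup>+x. ennreal ((a x)\<^sup>2) \<partial>lborel)"
proof -
  define A where "A = (\<lambda>x y. ennreal ((a x)\<^sup>2 / 2 * K x y))"
  define B where "B = (\<lambda>x y. ennreal ((a y)\<^sup>2 / 2 * K x y))"
  have amgm: "ennreal (a x * a y * K x y) \<le> A x y + B x y" for x y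
  proof -
    have "a x * a y * K x y \<le> ((a x)\<^sup>2 + (a y)\<^sup>2) / 2 * K x y"
      using sum_squares_bound[of "a x" "a y"] K_nonneg[of x y] by (intro mult_right_mono) auto
    then have "ennreal (a x * a y * K x y) \<le> ennreal ((a x)\<^sup>2 / 2 * K x y + (a y)\<^sup>2 / 2 * K x y)"
      by (intro ennreal_leI) (simp add: field_simps)
    also have "\<dots> = A x y + B x y"
      unfolding A_def B_def using K_nonneg[of x y] by (intro ennreal_plus) auto
    finally show ?thesis .
  qed
  have A_int: "(\<integral>\<^sup>+y. A x y \<partial>lborel) = ennreal ((a x)\<^sup>2 / 2)" for x
  proof -
    have "(\<integral>\<^sup>+y. A x y \<partial>lborel) = (\<integral>\<^sup>+y. ennreal ((a x)\<^sup>2 / 2) * ennreal (K x y) \<partial>lborel)"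
      unfolding A_def by (rule nn_integral_cong, rule ennreal_mult) (auto simp: K_nonneg)
    then show ?thesis by (simp add: nn_integral_cmult rows)
  qed
  have B_int: "(\<integral>\<^sup>+x. B x y \<partial>lborel) = ennreal ((a y)\<^sup>2 / 2)" for y
  proof -
    have "(\<integral>\<^sup>+x. B x y \<partial>lborel) = (\<integral>\<^sup>+x. ennreal ((a y)\<^sup>2 / 2) * ennreal (K x y) \<partial>lborel)"
      unfolding B_def by (rule nn_integral_cong, rule ennreal_mult) (auto simp: K_nonneg)
    then show ?thesis by (simp add: nn_integral_cmult cols)
  qed
  have "(\<integral>\<^sup>+x. (\<integral>\<^sup>+y. ennreal (a x * a y * K x y) \<partial>lborel) \<partial>lborel)
      \<le> (\<integral>\<^sup>+x. (\<integral>\<^sup>+y. A x y + B x y \<partial>lborel) \<partial>lborel)"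
    using amgm by (intro nn_integral_mono) auto
  also have "\<dots> = (\<integral>\<^sup>+x. (\<integral>\<^sup>+y. A x y \<partial>lborel) \<partial>lborel) + (\<integral>\<^sup>+x. (\<integral>\<^sup>+y. B x y \<partial>lborel) \<partial>lborel)"
    unfolding A_def B_def by (subst nn_integral_add[symmetric]; simp add: nn_integral_add)+
  also have "(\<integral>\<^sup>+x. (\<integral>\<^sup>+y. B x y \<partial>lborel) \<partial>lborel) = (\<integral>\<^sup>+y. (\<integral>\<^sup>+x. B x y \<partial>lborel) \<partial>lborel)"
    unfolding B_def by (rule lborel_pair.Fubini'[symmetric]) simp
  also have "(\<integral>\<^sup>+x. (\<integral>\<^sup>+y. A x y \<partial>lborel) \<partial>lborel) + (\<integral>\<^sup>+y. (\<integral>\<^sup>+x. B x y \<partial>lborel) \<partial>lborel)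
      = (\<integral>\<^sup>+x. ennreal ((a x)\<^sup>2 / 2) + ennreal ((a x)\<^sup>2 / 2) \<partial>lborel)"
    unfolding A_int B_int by (rule nn_integral_add[symmetric]) auto
  also have "\<dots> = (\<integral>\<^sup>+x. ennreal ((a x)\<^sup>2) \<partial>lborel)"
    by (intro nn_integral_cong) (simp add: ennreal_plus[symmetric] del: ennreal_plus)
  finally show ?thesis .
qed

subsection \<open>Gaussians\<close>

text \<open>The Gaussian damping factor is integrable (a rescaled normal density).\<close>
lemma gauss_integrable:
  fixes \<sigma> :: real assumes s: "\<sigma> > 0"
  shows "integrable lborel (\<lambda>k. exp (-(\<sigma>*k)\<^sup>2/2))"
proof -
  have "(\<lambda>k. exp (-(\<sigma>*k)\<^sup>2/2)) = (\<lambda>k. (sqrt (2*pi) / \<sigma>) * normal_density 0 (1/\<sigma>) k)"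
    using s by (auto simp: normal_density_def real_sqrt_mult real_sqrt_divide field_simps power2_eq_square)
  moreover have "integrable lborel (\<lambda>k. (sqrt (2*pi) / \<sigma>) * normal_density 0 (1/\<sigma>) k)"
    using s by (intro integrable_mult_right integrable_normal_density) simp
  ultimately show ?thesis by simp
qed

text \<open>Fourier transform of the Gaussian, from the characteristic function of the standard
  normal distribution: \<open>\<integral> e^{-(\<sigma>k)^2/2} e^{-ikt} dk = 2\<pi> N(0,\<sigma>)(t)\<close>.\<close>
lemma gauss_fourier:
  fixes \<sigma> t :: real assumes s: "\<sigma> > 0"
  shows "(\<integral>k. complex_of_real (exp (-(\<sigma>*k)\<^sup>2/2)) * exp (-(\<i> * complex_of_real (k*t))) \<partial>lborel)
         = complex_of_real (2*pi*normal_density 0 \<sigma> t)"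
proof -
  define s' where "s' = -t/\<sigma>"
  define g where "g = (\<lambda>x. std_normal_density x *\<^sub>R iexp (s' * x))"
  have "char std_normal_distribution s' = complex_of_real (exp (- (s'^2) / 2))"
    by (simp add: char_std_normal_distribution)
  moreover have "char std_normal_distribution s' = (\<integral>x. g x \<partial>lborel)"
    unfolding char_def g_def by (subst integral_density) auto
  ultimately have char: "(\<integral>x. g x \<partial>lborel) = complex_of_real (exp (- (s'^2) / 2))" by simp
  have rescale: "(\<integral>x. g x \<partial>lborel) = \<bar>\<sigma>\<bar> *\<^sub>R (\<integral>k. g (0 + \<sigma> * k) \<partial>lborel)"
    using s by (intro lborel_integral_real_affine) simp
  have g_scaled: "g (0 + \<sigma> * k) = complex_of_real (1/sqrt (2*pi)) *
      (complex_of_real (exp (-(\<sigma>*k)\<^sup>2/2)) * exp (-(\<i> * complex_of_real (k*t))))" for k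
    using s unfolding g_def s'_def std_normal_density_def
    by (simp add: scaleR_conv_of_real field_simps power2_eq_square)
  have "complex_of_real (exp (- (s'^2) / 2)) = complex_of_real (\<sigma>/sqrt (2*pi)) *
      (\<integral>k. complex_of_real (exp (-(\<sigma>*k)\<^sup>2/2)) * exp (-(\<i> * complex_of_real (k*t))) \<partial>lborel)"
    using char rescale s unfolding g_scaled by (simp add: scaleR_conv_of_real)
  then have "(\<integral>k. complex_of_real (exp (-(\<sigma>*k)\<^sup>2/2)) * exp (-(\<i> * complex_of_real (k*t))) \<partial>lborel)
     = complex_of_real (sqrt (2*pi)/\<sigma> * exp (- (s'^2) / 2))"
    using s by (simp add: field_simps)
  also have "sqrt (2*pi)/\<sigma> * exp (- (s'^2) / 2) = 2*pi*normal_density 0 \<sigma> t"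
    using s unfolding normal_density_def s'_def
    by (simp add: real_sqrt_mult field_simps power2_eq_square)
  finally show ?thesis .
qed

lemma normal_kernel_mass:
  fixes \<sigma> :: real assumes s: "\<sigma> > 0"
  shows "(\<integral>\<^sup>+y. ennreal (normal_density 0 \<sigma> (x - y)) \<partial>lborel) = 1"
    and "(\<integral>\<^sup>+x. ennreal (normal_density 0 \<sigma> (x - y)) \<partial>lborel) = 1"
proof -
  have "normal_density 0 \<sigma> (x - y) = normal_density x \<sigma> y" for x y
    by (simp add: normal_density_def power2_commute)
  then show "(\<integral>\<^sup>+y. ennreal (normal_density 0 \<sigma> (x - y)) \<partial>lborel) = 1"
    using s by (simp add: nn_integral_eq_integral)
  have "normal_density 0 \<sigma> (x - y) = normal_density y \<sigma> x" for x y
    by (simp add: normal_density_def)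
  then show "(\<integral>\<^sup>+x. ennreal (normal_density 0 \<sigma> (x - y)) \<partial>lborel) = 1"
    using s by (simp add: nn_integral_eq_integral)
qed

subsection \<open>The Fourier transform of integrable functions\<close>

lemma fourier_L1_meas:
  assumes [measurable]: "\<phi> \<in> borel_measurable lborel"
  shows "fourier_L1 \<phi> \<in> borel_measurable lborel"
proof -
  have [measurable]: "\<phi> \<in> borel_measurable borel" using assms by simp
  have "(\<lambda>k. \<integral>x. \<phi> x * exp (- (\<i> * complex_of_real (k * x))) \<partial>lborel) \<in> borel_measurable lborel"
    by measurable
  then show ?thesis unfolding fourier_L1_def[abs_def] .
qed

lemma fourier_L1_bound:
  assumes "integrable lborel \<phi>"
  shows "cmod (fourier_L1 \<phi> k) \<le> (\<integral>x. cmod (\<phi> x) \<partial>lborel)"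
proof -
  have "cmod (fourier_L1 \<phi> k) \<le> (\<integral>x. cmod (\<phi> x * exp (- (\<i> * complex_of_real (k * x)))) \<partial>lborel)"
    unfolding fourier_L1_def by (rule integral_norm_bound)
  also have "\<dots> = (\<integral>x. cmod (\<phi> x) \<partial>lborel)"
    by (simp add: norm_mult)
  finally show ?thesis .
qed

lemma fourier_L1_gauss_pairing:
  fixes \<phi> :: "real \<Rightarrow> complex" and \<sigma> x :: real
  assumes meas[measurable]: "\<phi> \<in> borel_measurable lborel" and int: "integrable lborel \<phi>"
    and s: "\<sigma> > 0"
  shows "(\<integral>k. complex_of_real (exp (-(\<sigma>*k)\<^sup>2/2)) * exp (-(\<i> * complex_of_real (k*x)))
             * cnj (fourier_L1 \<phi> k) \<partial>lborel)
       = (\<integral>y. cnj (\<phi> y) * complex_of_real (2*pi*normal_density 0 \<sigma> (x - y)) \<partial>lborel)"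
proof -
  have [measurable]: "\<phi> \<in> borel_measurable borel" using meas by simp
  define D where "D = (\<lambda>k::real. exp (-(\<sigma>*k)\<^sup>2/2))"
  define E where "E = (\<lambda>k x::real. exp (-(\<i> * complex_of_real (k*x))))"
  define G where "G = (\<lambda>k y. complex_of_real (D k) * E k x * (cnj (\<phi> y) * cnj (E k y)))"
  have E_norm: "cmod (E k y) = 1" for k y unfolding E_def by simp
  have G_int: "integrable (lborel \<Otimes>\<^sub>M lborel) (case_prod G)"
  proof (rule Bochner_Integration.integrable_bound)
    show "integrable (lborel \<Otimes>\<^sub>M lborel) (\<lambda>(k,y). D k * cmod (\<phi> y))"
      by (rule integrable_tensor_product) (use gauss_integrable[OF s] int in \<open>auto simp: D_def\<close>)
    show "case_prod G \<in> borel_measurable (lborel \<Otimes>\<^sub>M lborel)"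
      unfolding G_def D_def E_def by measurable
    show "AE p in lborel \<Otimes>\<^sub>M lborel. norm (case_prod G p) \<le> norm ((\<lambda>(k,y). D k * cmod (\<phi> y)) p)"
      by (rule AE_I2) (auto simp: G_def D_def norm_mult E_norm)
  qed
  have cnj_F: "cnj (fourier_L1 \<phi> k) = (\<integral>y. cnj (\<phi> y) * cnj (E k y) \<partial>lborel)" for k
    unfolding fourier_L1_def E_def Bochner_Integration.integral_cnj[symmetric] by simp
  have modulation: "E k x * cnj (E k y) = E k (x - y)" for k y
  proof -
    have "cnj (E k y) = exp (\<i> * complex_of_real (k*y))" unfolding E_def by (simp add: exp_cnj)
    then have "E k x * cnj (E k y) = exp (-(\<i> * complex_of_real (k*x)) + \<i> * complex_of_real (k*y))"
      unfolding E_def by (simp only: exp_add)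
    also have "-(\<i> * complex_of_real (k*x)) + \<i> * complex_of_real (k*y) = -(\<i> * complex_of_real (k*(x-y)))"
      by (simp add: algebra_simps)
    finally show ?thesis unfolding E_def .
  qed
  have "(\<integral>k. complex_of_real (D k) * E k x * cnj (fourier_L1 \<phi> k) \<partial>lborel)
      = (\<integral>k. (\<integral>y. G k y \<partial>lborel) \<partial>lborel)"
    unfolding cnj_F G_def by simp
  also have "\<dots> = (\<integral>y. (\<integral>k. G k y \<partial>lborel) \<partial>lborel)"
    using lborel_pair.Fubini_integral[OF G_int] by simp
  also have "\<dots> = (\<integral>y. cnj (\<phi> y) * (\<integral>k. complex_of_real (D k) * E k (x - y) \<partial>lborel) \<partial>lborel)"
    unfolding G_def modulation[symmetric] by (simp add: mult_ac)
  also have "\<dots> = (\<integral>y. cnj (\<phi> y) * complex_of_real (2*pi*normal_density 0 \<sigma> (x - y)) \<partial>lborel)"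
    unfolding D_def E_def gauss_fourier[OF s] ..
  finally show ?thesis unfolding D_def E_def .
qed

lemma damped_energy_identity:
  fixes \<phi> :: "real \<Rightarrow> complex" and \<sigma> :: real
  assumes meas[measurable]: "\<phi> \<in> borel_measurable lborel" and int: "integrable lborel \<phi>"
    and s: "\<sigma> > 0"
  shows "complex_of_real (\<integral>k. exp (-(\<sigma>*k)\<^sup>2/2) * (cmod (fourier_L1 \<phi> k))\<^sup>2 \<partial>lborel)
     = (\<integral>x. \<phi> x * (\<integral>y. cnj (\<phi> y) * complex_of_real (2*pi*normal_density 0 \<sigma> (x - y)) \<partial>lborel) \<partial>lborel)"
proof -
  have [measurable]: "\<phi> \<in> borel_measurable borel" using meas by simp
  define F where "F = fourier_L1 \<phi>"
  define N1 where "N1 = (\<integral>x. cmod (\<phi> x) \<partial>lborel)"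
  define D where "D = (\<lambda>k::real. exp (-(\<sigma>*k)\<^sup>2/2))"
  define E where "E = (\<lambda>k x::real. exp (-(\<i> * complex_of_real (k*x))))"
  define H where "H = (\<lambda>k x. \<phi> x * (complex_of_real (D k) * E k x * cnj (F k)))"
  have F_meas[measurable]: "F \<in> borel_measurable borel"
    unfolding F_def using fourier_L1_meas[OF meas] by simp
  have F_bound: "cmod (F k) \<le> N1" for k unfolding F_def N1_def using fourier_L1_bound[OF int] .
  have N1_nonneg: "N1 \<ge> 0" unfolding N1_def by simp
  have energy_slice: "complex_of_real (D k * (cmod (F k))\<^sup>2) = (\<integral>x. H k x \<partial>lborel)" for k
  proof -
    have "(\<integral>x. H k x \<partial>lborel) = (\<integral>x. (\<phi> x * E k x) * (complex_of_real (D k) * cnj (F k)) \<partial>lborel)"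
      unfolding H_def by (rule Bochner_Integration.integral_cong) (simp_all add: mult_ac)
    also have "\<dots> = (\<integral>x. \<phi> x * E k x \<partial>lborel) * (complex_of_real (D k) * cnj (F k))"
      by (rule integral_mult_left_zero)
    also have "\<dots> = complex_of_real (D k) * (F k * cnj (F k))"
      unfolding F_def fourier_L1_def E_def by (simp add: mult_ac)
    also have "\<dots> = complex_of_real (D k * (cmod (F k))\<^sup>2)"
      using complex_norm_square[of "F k"] by (metis of_real_mult)
    finally show ?thesis by simp
  qed
  have H_int: "integrable (lborel \<Otimes>\<^sub>M lborel) (case_prod H)"
  proof (rule Bochner_Integration.integrable_bound)
    show "integrable (lborel \<Otimes>\<^sub>M lborel) (\<lambda>(k,x). (D k * N1) * cmod (\<phi> x))"
      by (rule integrable_tensor_product) (use gauss_integrable[OF s] int in \<open>auto simp: D_def\<close>)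
    show "case_prod H \<in> borel_measurable (lborel \<Otimes>\<^sub>M lborel)"
      unfolding H_def D_def E_def by measurable
    have "norm (H k x) \<le> D k * N1 * cmod (\<phi> x)" for k x
      using F_bound[of k] by (simp add: H_def D_def E_def norm_mult mult_right_mono mult_ac)
    then show "AE p in lborel \<Otimes>\<^sub>M lborel. norm (case_prod H p) \<le> norm ((\<lambda>(k,x). (D k * N1) * cmod (\<phi> x)) p)"
      using N1_nonneg by (intro AE_I2) (auto simp: D_def abs_mult mult_ac)
  qed
  have "complex_of_real (\<integral>k. D k * (cmod (F k))\<^sup>2 \<partial>lborel) = (\<integral>k. (\<integral>x. H k x \<partial>lborel) \<partial>lborel)"
    by (subst integral_complex_of_real[symmetric]) (simp only: energy_slice)
  also have "\<dots> = (\<integral>x. (\<integral>k. H k x \<partial>lborel) \<partial>lborel)"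
    using lborel_pair.Fubini_integral[OF H_int] by simp
  also have "\<dots> = (\<integral>x. \<phi> x * (\<integral>k. complex_of_real (D k) * E k x * cnj (F k) \<partial>lborel) \<partial>lborel)"
    unfolding H_def by simp
  also have "\<dots> = (\<integral>x. \<phi> x * (\<integral>y. cnj (\<phi> y) * complex_of_real (2*pi*normal_density 0 \<sigma> (x - y)) \<partial>lborel) \<partial>lborel)"
    unfolding D_def E_def F_def fourier_L1_gauss_pairing[OF meas int s] ..
  finally show ?thesis unfolding D_def F_def .
qed

text \<open>The heat-kernel quadratic form is bounded by \<open>2\<pi> \<parallel>\<phi>\<parallel>_2^2\<close> (Schur test).\<close>
lemma heat_kernel_form_bound:
  fixes \<phi> :: "real \<Rightarrow> complex" and \<sigma> :: real
  assumes meas[measurable]: "\<phi> \<in> borel_measurable lborel"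
    and sq: "integrable lborel (\<lambda>x. (cmod (\<phi> x))\<^sup>2)" and s: "\<sigma> > 0"
  shows "norm (\<integral>x. \<phi> x * (\<integral>y. cnj (\<phi> y) * complex_of_real (2*pi*normal_density 0 \<sigma> (x - y)) \<partial>lborel) \<partial>lborel)
     \<le> 2*pi * (\<integral>x. (cmod (\<phi> x))\<^sup>2 \<partial>lborel)"
proof -
  have [measurable]: "\<phi> \<in> borel_measurable borel" using meas by simp
  define a where "a = (\<lambda>x. cmod (\<phi> x))"
  define K where "K = (\<lambda>x y. normal_density 0 \<sigma> (x - y))"
  define J where "J = (\<lambda>x. \<integral>y. cnj (\<phi> y) * complex_of_real (2*pi*K x y) \<partial>lborel)"
  have [measurable]: "a \<in> borel_measurable borel" unfolding a_def by measurable
  have [measurable]: "case_prod K \<in> borel_measurable (borel \<Otimes>\<^sub>M borel)" unfolding K_def by measurable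
  have K_nonneg: "K x y \<ge> 0" for x y unfolding K_def by simp
  have a_nonneg: "a x \<ge> 0" for x unfolding a_def by simp
  have J_bound: "ennreal (norm (J x)) \<le> (\<integral>\<^sup>+y. ennreal (2*pi) * ennreal (a y * K x y) \<partial>lborel)" for x
  proof -
    have "ennreal (norm (J x)) \<le> (\<integral>\<^sup>+y. norm (cnj (\<phi> y) * complex_of_real (2*pi*K x y)) \<partial>lborel)"
      unfolding J_def by (rule norm_integral_le_nn_integral)
    also have "\<dots> = (\<integral>\<^sup>+y. ennreal (2*pi) * ennreal (a y * K x y) \<partial>lborel)"
      using K_nonneg a_nonneg by (simp add: a_def norm_mult ennreal_mult'[symmetric] mult_ac)
    finally show ?thesis .
  qed
  have "ennreal (norm (\<integral>x. \<phi> x * J x \<partial>lborel)) \<le> (\<integral>\<^sup>+x. ennreal (a x) * ennreal (norm (J x)) \<partial>lborel)"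
    using norm_integral_le_nn_integral[of lborel "\<lambda>x. \<phi> x * J x"]
    by (simp add: a_def norm_mult ennreal_mult)
  also have "\<dots> \<le> (\<integral>\<^sup>+x. ennreal (a x) * (\<integral>\<^sup>+y. ennreal (2*pi) * ennreal (a y * K x y) \<partial>lborel) \<partial>lborel)"
    using J_bound by (intro nn_integral_mono mult_left_mono) auto
  also have "\<dots> = ennreal (2*pi) * (\<integral>\<^sup>+x. (\<integral>\<^sup>+y. ennreal (a x * a y * K x y) \<partial>lborel) \<partial>lborel)"
    using a_nonneg K_nonneg
    by (simp add: nn_integral_cmult[symmetric] ennreal_mult[symmetric] mult_ac del: ennreal_mult)
  also have "\<dots> \<le> ennreal (2*pi) * (\<integral>\<^sup>+x. ennreal ((a x)\<^sup>2) \<partial>lborel)"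
    using normal_kernel_mass[OF s]
    by (intro mult_left_mono schur_test_stochastic_kernel) (auto simp: a_nonneg K_nonneg K_def)
  also have "\<dots> = ennreal (2*pi * (\<integral>x. (cmod (\<phi> x))\<^sup>2 \<partial>lborel))"
    using sq by (simp add: a_def nn_integral_eq_integral ennreal_mult)
  finally show ?thesis unfolding J_def K_def
    using sq by (simp add: ennreal_le_iff integral_nonneg_AE)
qed

lemma damped_plancherel:
  fixes \<phi> :: "real \<Rightarrow> complex" and \<sigma> :: real
  assumes meas[measurable]: "\<phi> \<in> borel_measurable lborel" and int: "integrable lborel \<phi>"
    and sq: "integrable lborel (\<lambda>x. (cmod (\<phi> x))\<^sup>2)" and s: "\<sigma> > 0"
  shows "integrable lborel (\<lambda>k. exp (-(\<sigma>*k)\<^sup>2/2) * (cmod (fourier_L1 \<phi> k))\<^sup>2)"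
    and "(\<integral>k. exp (-(\<sigma>*k)\<^sup>2/2) * (cmod (fourier_L1 \<phi> k))\<^sup>2 \<partial>lborel)
           \<le> 2*pi * (\<integral>x. (cmod (\<phi> x))\<^sup>2 \<partial>lborel)"
proof -
  define N1 where "N1 = (\<integral>x. cmod (\<phi> x) \<partial>lborel)"
  have [measurable]: "fourier_L1 \<phi> \<in> borel_measurable borel"
    using fourier_L1_meas[OF meas] by simp
  show "integrable lborel (\<lambda>k. exp (-(\<sigma>*k)\<^sup>2/2) * (cmod (fourier_L1 \<phi> k))\<^sup>2)"
  proof (rule Bochner_Integration.integrable_bound)
    show "integrable lborel (\<lambda>k. exp (-(\<sigma>*k)\<^sup>2/2) * N1\<^sup>2)"
      using gauss_integrable[OF s] by simp
    show "(\<lambda>k. exp (-(\<sigma>*k)\<^sup>2/2) * (cmod (fourier_L1 \<phi> k))\<^sup>2) \<in> borel_measurable lborel" by simp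
    have "(cmod (fourier_L1 \<phi> k))\<^sup>2 \<le> N1\<^sup>2" for k
      using fourier_L1_bound[OF int, of k] unfolding N1_def by (intro power_mono) auto
    then show "AE k in lborel. norm (exp (-(\<sigma>*k)\<^sup>2/2) * (cmod (fourier_L1 \<phi> k))\<^sup>2)
        \<le> norm (exp (-(\<sigma>*k)\<^sup>2/2) * N1\<^sup>2)"
      by (intro AE_I2) (simp add: abs_mult)
  qed
  have "complex_of_real (\<integral>k. exp (-(\<sigma>*k)\<^sup>2/2) * (cmod (fourier_L1 \<phi> k))\<^sup>2 \<partial>lborel)
      = (\<integral>x. \<phi> x * (\<integral>y. cnj (\<phi> y) * complex_of_real (2*pi*normal_density 0 \<sigma> (x - y)) \<partial>lborel) \<partial>lborel)"
    by (rule damped_energy_identity[OF meas int s])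
  then have "norm (complex_of_real (\<integral>k. exp (-(\<sigma>*k)\<^sup>2/2) * (cmod (fourier_L1 \<phi> k))\<^sup>2 \<partial>lborel))
      \<le> 2*pi * (\<integral>x. (cmod (\<phi> x))\<^sup>2 \<partial>lborel)"
    using heat_kernel_form_bound[OF meas sq s] by (simp only:)
  then show "(\<integral>k. exp (-(\<sigma>*k)\<^sup>2/2) * (cmod (fourier_L1 \<phi> k))\<^sup>2 \<partial>lborel)
           \<le> 2*pi * (\<integral>x. (cmod (\<phi> x))\<^sup>2 \<partial>lborel)"
    by simp
qed

text \<open>Plancherel inequality on \<open>L^1 \<inter> L^2\<close>: letting the damping \<open>\<sigma> = 1/(n+1)\<close> tend to 0
  (monotone convergence), \<open>\<phi>^ \<in> L^2\<close> and \<open>\<parallel>\<phi>^\<parallel>_2^2 \<le> 2\<pi> \<parallel>\<phi>\<parallel>_2^2\<close>.\<close>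
lemma plancherel_le:
  fixes \<phi> :: "real \<Rightarrow> complex"
  assumes meas[measurable]: "\<phi> \<in> borel_measurable lborel" and int: "integrable lborel \<phi>"
    and sq: "integrable lborel (\<lambda>x. (cmod (\<phi> x))\<^sup>2)"
  shows "is_L2 (fourier_L1 \<phi>)"
    and "(\<integral>k. (cmod (fourier_L1 \<phi> k))\<^sup>2 \<partial>lborel) \<le> 2*pi * (\<integral>x. (cmod (\<phi> x))\<^sup>2 \<partial>lborel)"
proof -
  define F where "F = fourier_L1 \<phi>"
  define B where "B = 2*pi * (\<integral>x. (cmod (\<phi> x))\<^sup>2 \<partial>lborel)"
  have B_nonneg: "B \<ge> 0" unfolding B_def by simp
  have [measurable]: "F \<in> borel_measurable borel" unfolding F_def using fourier_L1_meas[OF meas] by simp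
  define damped where
    "damped = (\<lambda>n::nat. \<lambda>k. ennreal (exp (-(inverse (real (Suc n))*k)\<^sup>2/2) * (cmod (F k))\<^sup>2))"
  have inc: "incseq damped"
  proof (rule incseq_SucI, rule le_funI)
    fix n k
    have "inverse (real (Suc (Suc n))) \<le> inverse (real (Suc n))"
      by (simp add: field_simps)
    then have "(inverse (real (Suc (Suc n))))\<^sup>2 * k\<^sup>2 \<le> (inverse (real (Suc n)))\<^sup>2 * k\<^sup>2"
      by (intro mult_right_mono power_mono) auto
    then have "(inverse (real (Suc (Suc n)))*k)\<^sup>2 \<le> (inverse (real (Suc n))*k)\<^sup>2"
      by (simp only: power_mult_distrib)
    then show "damped n k \<le> damped (Suc n) k" unfolding damped_def
      by (intro ennreal_leI mult_right_mono) auto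
  qed
  have lim: "(\<lambda>n. damped n k) \<longlonglongrightarrow> ennreal ((cmod (F k))\<^sup>2)" for k
  proof -
    have "(\<lambda>n. exp (-(inverse (real (Suc n))*k)\<^sup>2/2) * (cmod (F k))\<^sup>2) \<longlonglongrightarrow> exp (-(0*k)\<^sup>2/2) * (cmod (F k))\<^sup>2"
      by (intro tendsto_intros LIMSEQ_inverse_real_of_nat) simp
    then show ?thesis unfolding damped_def by (intro tendsto_ennrealI) simp
  qed
  have "integral\<^sup>N lborel (damped n) \<le> ennreal B" for n
  proof -
    have "inverse (real (Suc n)) > 0" by simp
    note damped_n = damped_plancherel[OF meas int sq this]
    have "integral\<^sup>N lborel (damped n)
        = ennreal (\<integral>k. exp (-(inverse (real (Suc n))*k)\<^sup>2/2) * (cmod (F k))\<^sup>2 \<partial>lborel)"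
      unfolding damped_def F_def using damped_n(1) by (intro nn_integral_eq_integral) auto
    then show ?thesis using damped_n(2) unfolding B_def F_def by (simp add: ennreal_leI)
  qed
  moreover have "(\<lambda>n. integral\<^sup>N lborel (damped n)) \<longlonglongrightarrow> (\<integral>\<^sup>+k. ennreal ((cmod (F k))\<^sup>2) \<partial>lborel)"
    by (rule nn_integral_LIMSEQ[OF inc _ lim]) (simp add: damped_def)
  ultimately have energy: "(\<integral>\<^sup>+k. ennreal ((cmod (F k))\<^sup>2) \<partial>lborel) \<le> ennreal B"
    by (intro LIMSEQ_le_const2) auto
  have F_sq: "integrable lborel (\<lambda>k. (cmod (F k))\<^sup>2)"
    unfolding integrable_iff_bounded using energy by (auto simp: top.not_eq_extremum intro: le_less_trans)
  show "is_L2 (fourier_L1 \<phi>)" unfolding is_L2_def F_def[symmetric] using F_sq by simp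
  have "ennreal (\<integral>k. (cmod (F k))\<^sup>2 \<partial>lborel) \<le> ennreal B"
    using energy F_sq by (subst nn_integral_eq_integral[symmetric]) auto
  then show "(\<integral>k. (cmod (fourier_L1 \<phi> k))\<^sup>2 \<partial>lborel) \<le> 2*pi * (\<integral>x. (cmod (\<phi> x))\<^sup>2 \<partial>lborel)"
    using B_nonneg unfolding F_def B_def by (simp add: ennreal_le_iff)
qed

subsection \<open>The L^2 Fourier transform\<close>

text \<open>Linearity of the L^2 Fourier transform (differences); the test functions' transforms
  lie in L^2 by the Plancherel inequality, so all pairings are integrable.\<close>
lemma fourier_L2_diff:
  assumes h1: "fourier_L2 u1 g1" and h2: "fourier_L2 u2 g2"
  shows "fourier_L2 (\<lambda>x. u1 x - u2 x) (\<lambda>k. g1 k - g2 k)"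
  unfolding fourier_L2_def
proof (intro conjI allI impI)
  have L: "is_L2 u1" "is_L2 u2" "is_L2 g1" "is_L2 g2" using h1 h2 unfolding fourier_L2_def by auto
  then show "is_L2 (\<lambda>x. u1 x - u2 x)" "is_L2 (\<lambda>k. g1 k - g2 k)" by (auto intro: L2_diff)
  fix \<phi> assume test: "integrable lborel \<phi> \<and> is_L2 \<phi>"
  then have "is_L2 (fourier_L1 \<phi>)"
    using plancherel_le(1)[of \<phi>] by (auto dest: is_L2_sq)
  then have int_u: "integrable lborel (\<lambda>x. u1 x * fourier_L1 \<phi> x)" "integrable lborel (\<lambda>x. u2 x * fourier_L1 \<phi> x)"
    using L2_prod_int L by blast+
  have int_g: "integrable lborel (\<lambda>k. g1 k * \<phi> k)" "integrable lborel (\<lambda>k. g2 k * \<phi> k)"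
    using L2_prod_int L test by blast+
  have "(\<integral>k. (g1 k - g2 k) * \<phi> k \<partial>lborel) = (\<integral>k. g1 k * \<phi> k \<partial>lborel) - (\<integral>k. g2 k * \<phi> k \<partial>lborel)"
    using int_g by (simp add: left_diff_distrib)
  also have "\<dots> = (\<integral>x. u1 x * fourier_L1 \<phi> x \<partial>lborel) - (\<integral>x. u2 x * fourier_L1 \<phi> x \<partial>lborel)"
    using h1 h2 test unfolding fourier_L2_def by auto
  also have "\<dots> = (\<integral>x. (u1 x - u2 x) * fourier_L1 \<phi> x \<partial>lborel)"
    using int_u by (simp add: left_diff_distrib)
  finally show "(\<integral>k. (g1 k - g2 k) * \<phi> k \<partial>lborel) = (\<integral>x. (u1 x - u2 x) * fourier_L1 \<phi> x \<partial>lborel)" .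
qed

lemma young_parameter:
  fixes a b t :: real assumes t: "t > 0"
  shows "a * b \<le> t/2 * a\<^sup>2 + b\<^sup>2 / (2*t)"
proof -
  have "0 \<le> (t*a - b)\<^sup>2 / (2*t)" using t by simp
  also have "(t*a - b)\<^sup>2 / (2*t) = t/2 * a\<^sup>2 + b\<^sup>2 / (2*t) - a * b"
    using t by (simp add: power2_eq_square field_simps)
  finally show ?thesis by simp
qed

text \<open>Energy of an L^2 Fourier transform on the interval \<open>[-r, r]\<close>, by duality: testing with
  \<open>\<phi> = 1_{[-r,r]} conj g \<in> L^1 \<inter> L^2\<close> gives \<open>I = \<integral> h \<phi>^ \<le> \<pi>\<parallel>h\<parallel>^2 + \<parallel>\<phi>^\<parallel>^2/(4\<pi>) \<le> \<pi>\<parallel>h\<parallel>^2 + I/2\<close>.\<close>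
lemma fourier_L2_truncated_energy:
  fixes r :: real
  assumes hg: "fourier_L2 h g"
  shows "(\<integral>k. indicator {-r..r} k * (cmod (g k))\<^sup>2 \<partial>lborel) \<le> 2*pi * (\<integral>x. (cmod (h x))\<^sup>2 \<partial>lborel)"
proof -
  have Lh: "is_L2 h" and Lg: "is_L2 g" using hg unfolding fourier_L2_def by auto
  have [measurable]: "g \<in> borel_measurable borel" using Lg by (rule is_L2_meas)
  have g_sq: "integrable lborel (\<lambda>k. (cmod (g k))\<^sup>2)" using Lg by (rule is_L2_sq)
  define I where "I = (\<integral>k. indicator {-r..r} k * (cmod (g k))\<^sup>2 \<partial>lborel)"
  define \<phi> where "\<phi> = (\<lambda>k. indicator {-r..r} k *\<^sub>R cnj (g k))"
  have [measurable]: "\<phi> \<in> borel_measurable borel" unfolding \<phi>_def by measurable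
  have \<phi>_sq_eq: "(cmod (\<phi> k))\<^sup>2 = indicator {-r..r} k * (cmod (g k))\<^sup>2" for k
    unfolding \<phi>_def by (auto simp: indicator_def)
  have \<phi>_int: "integrable lborel \<phi>"
  proof (rule Bochner_Integration.integrable_bound)
    show "integrable lborel (\<lambda>k. indicator {-r..r} k + (cmod (g k))\<^sup>2)"
      using g_sq by (intro Bochner_Integration.integrable_add integrable_real_indicator)
        (auto simp: emeasure_lborel_Icc_eq)
    have "cmod (g k) \<le> 1 + (cmod (g k))\<^sup>2" for k
      using sum_squares_bound[of 1 "cmod (g k)"] norm_ge_zero[of "g k"] unfolding power_one by linarith
    then show "AE k in lborel. norm (\<phi> k) \<le> norm (indicator {-r..r} k + (cmod (g k))\<^sup>2)"
      unfolding \<phi>_def by (intro AE_I2) (auto simp: indicator_def)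
  qed simp
  have \<phi>_L2: "is_L2 \<phi>"
    unfolding is_L2_def \<phi>_sq_eq using integrable_mult_indicator[of "{-r..r}" lborel, OF _ g_sq] by simp
  have \<phi>_sq: "integrable lborel (\<lambda>k. (cmod (\<phi> k))\<^sup>2)" using \<phi>_L2 by (rule is_L2_sq)
  note plancherel = plancherel_le[of \<phi>, OF _ \<phi>_int \<phi>_sq, simplified]
  have "complex_of_real I = (\<integral>k. complex_of_real (indicator {-r..r} k * (cmod (g k))\<^sup>2) \<partial>lborel)"
    unfolding I_def by (rule integral_complex_of_real[symmetric])
  also have "\<dots> = (\<integral>k. g k * \<phi> k \<partial>lborel)"
    unfolding \<phi>_def using complex_norm_square
    by (intro Bochner_Integration.integral_cong) (auto simp: indicator_def)
  also have "\<dots> = (\<integral>x. h x * fourier_L1 \<phi> x \<partial>lborel)"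
    using hg \<phi>_int \<phi>_L2 unfolding fourier_L2_def by auto
  finally have duality: "complex_of_real I = (\<integral>x. h x * fourier_L1 \<phi> x \<partial>lborel)" .
  have "I \<le> (\<integral>x. norm (h x * fourier_L1 \<phi> x) \<partial>lborel)"
    using integral_norm_bound[of lborel "\<lambda>x. h x * fourier_L1 \<phi> x"] unfolding duality[symmetric] by simp
  also have "\<dots> \<le> (\<integral>x. pi * (cmod (h x))\<^sup>2 + (cmod (fourier_L1 \<phi> x))\<^sup>2 / (4*pi) \<partial>lborel)"
  proof (rule integral_mono)
    show "integrable lborel (\<lambda>x. norm (h x * fourier_L1 \<phi> x))"
      using L2_prod_int[OF Lh plancherel(1)] by simp
    show "integrable lborel (\<lambda>x. pi * (cmod (h x))\<^sup>2 + (cmod (fourier_L1 \<phi> x))\<^sup>2 / (4*pi))"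
      using is_L2_sq[OF Lh] is_L2_sq[OF plancherel(1)] by auto
    show "norm (h x * fourier_L1 \<phi> x) \<le> pi * (cmod (h x))\<^sup>2 + (cmod (fourier_L1 \<phi> x))\<^sup>2 / (4*pi)" for x
      using young_parameter[of "2*pi" "cmod (h x)" "cmod (fourier_L1 \<phi> x)"] by (simp add: norm_mult)
  qed
  also have "\<dots> = pi * (\<integral>x. (cmod (h x))\<^sup>2 \<partial>lborel) + (\<integral>x. (cmod (fourier_L1 \<phi> x))\<^sup>2 \<partial>lborel) / (4*pi)"
    using is_L2_sq[OF Lh] is_L2_sq[OF plancherel(1)] by simp
  also have "\<dots> \<le> pi * (\<integral>x. (cmod (h x))\<^sup>2 \<partial>lborel) + (2*pi * I) / (4*pi)"
    using plancherel(2) unfolding \<phi>_sq_eq I_def by (intro add_left_mono divide_right_mono) auto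
  finally show ?thesis unfolding I_def by (simp add: field_simps)
qed

text \<open>Plancherel inequality for the L^2 Fourier transform: \<open>\<parallel>g\<parallel>_2^2 \<le> 2\<pi> \<parallel>h\<parallel>_2^2\<close>
  (the truncated bounds pass to the limit \<open>r \<rightarrow> \<infinity>\<close> by dominated convergence).\<close>
lemma fourier_L2_energy_bound:
  assumes hg: "fourier_L2 h g"
  shows "(\<integral>k. (cmod (g k))\<^sup>2 \<partial>lborel) \<le> 2*pi * (\<integral>x. (cmod (h x))\<^sup>2 \<partial>lborel)"
proof -
  have Lg: "is_L2 g" using hg unfolding fourier_L2_def by auto
  have [measurable]: "g \<in> borel_measurable borel" using Lg by (rule is_L2_meas)
  have "(\<lambda>n::nat. \<integral>k. indicator {-real n..real n} k * (cmod (g k))\<^sup>2 \<partial>lborel)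
      \<longlonglongrightarrow> (\<integral>k. (cmod (g k))\<^sup>2 \<partial>lborel)"
  proof (rule integral_dominated_convergence[where w="\<lambda>k. (cmod (g k))\<^sup>2"])
    show "integrable lborel (\<lambda>k. (cmod (g k))\<^sup>2)" using Lg by (rule is_L2_sq)
    show "AE k in lborel. (\<lambda>n. indicator {-real n..real n} k * (cmod (g k))\<^sup>2) \<longlonglongrightarrow> (cmod (g k))\<^sup>2"
    proof (rule AE_I2)
      fix k :: real
      obtain N :: nat where N: "\<bar>k\<bar> \<le> real N" using real_arch_simple by blast
      have "\<forall>n\<ge>N. indicator {-real n..real n} k * (cmod (g k))\<^sup>2 = (cmod (g k))\<^sup>2"
        using N by (auto simp: indicator_def abs_le_iff)
      then show "(\<lambda>n. indicator {-real n..real n} k * (cmod (g k))\<^sup>2) \<longlonglongrightarrow> (cmod (g k))\<^sup>2"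
        by (intro tendsto_eventually) (auto simp: eventually_sequentially)
    qed
    show "AE k in lborel. norm (indicator {-real n..real n} k * (cmod (g k))\<^sup>2) \<le> (cmod (g k))\<^sup>2" for n
      by (rule AE_I2) (auto simp: indicator_def)
  qed simp_all
  then show ?thesis
    using fourier_L2_truncated_energy[OF hg] by (intro LIMSEQ_le_const2) auto
qed

text \<open>The L^2 Fourier transform is unique almost everywhere; hence \<open>fourier u\<close> is a
  representative of it whenever one exists.\<close>
lemma fourier_L2_unique:
  assumes "fourier_L2 u g1" "fourier_L2 u g2"
  shows "AE k in lborel. g1 k = g2 k"
proof -
  have diff: "fourier_L2 (\<lambda>x. u x - u x) (\<lambda>k. g1 k - g2 k)" by (rule fourier_L2_diff[OF assms])
  then have sq: "integrable lborel (\<lambda>k. (cmod (g1 k - g2 k))\<^sup>2)"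
    unfolding fourier_L2_def by (auto dest: is_L2_sq)
  have "(\<integral>k. (cmod (g1 k - g2 k))\<^sup>2 \<partial>lborel) = 0"
    using fourier_L2_energy_bound[OF diff] by (simp add: order_antisym integral_nonneg_AE)
  then have "AE k in lborel. (cmod (g1 k - g2 k))\<^sup>2 = 0"
    using sq by (subst integral_nonneg_eq_0_iff_AE[symmetric]) auto
  then show ?thesis by eventually_elim simp
qed

lemma fourier_representative:
  assumes "fourier_L2 u g"
  shows "fourier_L2 u (fourier u)" and "AE k in lborel. fourier u k = g k"
proof -
  show F: "fourier_L2 u (fourier u)" unfolding fourier_def by (rule someI[of _ g]) (rule assms)
  show "AE k in lborel. fourier u k = g k" by (rule fourier_L2_unique[OF F assms])
qed

subsection \<open>Symbol estimates\<close>

lemma spectral_margin_pos: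
  fixes c :: real assumes "c > 1"
  shows "(1 - 1/c)/2 > 0"
  using assms by (simp add: field_simps)

text \<open>If \<open>\<alpha>(k) \<ge> a|k|^m\<close> for large \<open>|k|\<close>, the Sobolev weight \<open>(1+k^2)^{m/2}\<close> is dominated by
  \<open>\<alpha>(k) + \<delta>\<close> for any \<open>\<delta> > 0\<close> (near the origin the constant \<open>\<delta>\<close> takes over).\<close>
lemma sobolev_weight_bound:
  fixes \<alpha> :: "real \<Rightarrow> real" and m a \<delta> R :: real
  assumes m: "m \<ge> 0" and a: "a > 0" and d: "\<delta> > 0" and \<alpha>_nonneg: "\<And>k. \<alpha> k \<ge> 0"
    and growth: "\<And>k. \<bar>k\<bar> \<ge> R \<Longrightarrow> a * \<bar>k\<bar> powr m \<le> \<alpha> k"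
  shows "\<exists>M>0. \<forall>k. (1 + k\<^sup>2) powr (m/2) \<le> M * (\<alpha> k + \<delta>)"
proof -
  define R1 where "R1 = max R 1"
  define M where "M = max (2 powr (m/2) / a) ((1 + R1\<^sup>2) powr (m/2) / \<delta>)"
  have M_pos: "M > 0" unfolding M_def using a by (simp add: less_max_iff_disj)
  have "(1 + k\<^sup>2) powr (m/2) \<le> M * (\<alpha> k + \<delta>)" for k
  proof (cases "\<bar>k\<bar> \<ge> R1")
    case True
    then have k1: "\<bar>k\<bar> \<ge> 1" and kR: "\<bar>k\<bar> \<ge> R" unfolding R1_def by auto
    have "1 + k\<^sup>2 \<le> 2 * k\<^sup>2"
      using one_le_power[OF k1, of 2] by simp
    then have "(1 + k\<^sup>2) powr (m/2) \<le> (2 * k\<^sup>2) powr (m/2)"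
      using m by (intro powr_mono2) auto
    also have "\<dots> = 2 powr (m/2) * \<bar>k\<bar> powr m"
    proof -
      have "k\<^sup>2 = \<bar>k\<bar> powr 2" using k1 by (simp add: powr_numeral)
      then have "(k\<^sup>2) powr (m/2) = \<bar>k\<bar> powr (2 * (m/2))" by (simp only: powr_powr)
      then show ?thesis by (simp add: powr_mult)
    qed
    also have "\<dots> \<le> 2 powr (m/2) * (\<alpha> k / a)"
      using growth[OF kR] a by (intro mult_left_mono) (auto simp: field_simps)
    also have "\<dots> = (2 powr (m/2) / a) * \<alpha> k" by simp
    also have "\<dots> \<le> M * (\<alpha> k + \<delta>)"
      using \<alpha>_nonneg[of k] d M_pos by (intro mult_mono) (auto simp: M_def)
    finally show ?thesis .
  next
    case False
    then have "k\<^sup>2 \<le> R1\<^sup>2" using abs_le_square_iff by fastforce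
    then have "(1 + k\<^sup>2) powr (m/2) \<le> (1 + R1\<^sup>2) powr (m/2)"
      using m by (intro powr_mono2) auto
    also have "\<dots> = ((1 + R1\<^sup>2) powr (m/2) / \<delta>) * \<delta>" using d by simp
    also have "\<dots> \<le> M * (\<alpha> k + \<delta>)"
      using \<alpha>_nonneg[of k] d M_pos by (intro mult_mono) (auto simp: M_def)
    finally show ?thesis .
  qed
  with M_pos show ?thesis by blast
qed

text \<open>The symbol \<open>1 - \<lambda>/(\<lambda> - i\<omega>) = -i\<omega>/(\<lambda> - i\<omega>)\<close> of \<open>1 - E^{\<lambda>,-}\<close> has modulus at most 1.\<close>
lemma damping_symbol_bound:
  fixes lam \<omega> :: real assumes lam: "lam \<noteq> 0"
  shows "cmod (1 - complex_of_real lam / (complex_of_real lam - \<i> * complex_of_real \<omega>)) \<le> 1"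
proof -
  define d where "d = complex_of_real lam - \<i> * complex_of_real \<omega>"
  have d_nz: "d \<noteq> 0" using lam unfolding d_def by (auto simp: complex_eq_iff)
  have "1 - complex_of_real lam / d = - (\<i> * complex_of_real \<omega>) / d"
    using d_nz unfolding d_def by (simp add: field_simps)
  moreover have "cmod (\<i> * complex_of_real \<omega>) \<le> cmod d"
    using abs_Im_le_cmod[of d] unfolding d_def by (simp add: norm_mult)
  ultimately show ?thesis
    using d_nz unfolding d_def by (simp add: norm_divide divide_le_eq_1)
qed

text \<open>Absorption of the nonlocal term: from the Fourier-side equation,
  \<open>(\<alpha> + \<delta>) |gu| \<le> |gv| + |gw - gu|\<close>, since \<open>Re (\<alpha> + 1 - z) \<ge> \<alpha> + \<delta> + 1/c\<close>.\<close>
lemma symbol_absorption: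
  fixes gu gv gw z :: complex and \<alpha> \<delta> c lam k :: real
  assumes c: "c > 1" and lam: "lam > 0" and d: "\<delta> = (1 - 1/c)/2" and z: "Re z \<le> \<delta>"
    and eq: "gv = (complex_of_real \<alpha> + 1 - z) * gu
          - complex_of_real (1/c) *
              (1 - complex_of_real lam / (complex_of_real lam - \<i> * complex_of_real (c * k))) * gw"
  shows "(\<alpha> + \<delta>) * cmod gu \<le> cmod gv + cmod (gw - gu)"
proof -
  define s where "s = 1 - complex_of_real lam / (complex_of_real lam - \<i> * complex_of_real (c * k))"
  define \<beta> where "\<beta> = complex_of_real \<alpha> + 1 - z"
  define Q where "Q = gw - gu"
  have s_le: "cmod s \<le> 1" unfolding s_def using lam by (intro damping_symbol_bound) simp
  have \<beta>_ge: "\<alpha> + \<delta> + 1/c \<le> cmod \<beta>"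
    using complex_Re_le_cmod[of \<beta>] z d unfolding \<beta>_def by (simp add: field_simps)
  have eq': "\<beta> * gu = gv + complex_of_real (1/c) * s * (gu + Q)"
    using eq unfolding \<beta>_def s_def Q_def by (simp add: algebra_simps)
  have "(\<alpha> + \<delta> + 1/c) * cmod gu \<le> cmod \<beta> * cmod gu"
    using \<beta>_ge by (intro mult_right_mono) auto
  also have "\<dots> = cmod (gv + complex_of_real (1/c) * s * (gu + Q))"
    unfolding eq'[symmetric] by (simp add: norm_mult)
  also have "\<dots> \<le> cmod gv + cmod (complex_of_real (1/c) * s * (gu + Q))"
    by (rule norm_triangle_ineq)
  also have "cmod (complex_of_real (1/c) * s * (gu + Q)) = (1/c) * cmod s * cmod (gu + Q)"
    using c by (simp add: norm_mult norm_divide)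
  also have "\<dots> \<le> (1/c) * 1 * (cmod gu + cmod Q)"
    using c s_le norm_triangle_ineq[of gu Q] by (intro mult_mono) auto
  finally have "(\<alpha> + \<delta>) * cmod gu \<le> cmod gv + (1/c) * cmod Q" by (simp add: algebra_simps)
  moreover have "(1/c) * cmod Q \<le> cmod Q"
    using c by (simp add: field_simps mult_le_cancel_right1)
  ultimately show ?thesis unfolding Q_def by linarith
qed

lemma symbol_pointwise_estimate:
  fixes gu gv gw z :: complex and \<alpha> \<delta> c lam M w k :: real
  assumes c: "c > 1" and lam: "lam > 0" and d: "\<delta> = (1 - 1/c)/2" and z: "Re z \<le> \<delta>"
    and \<alpha>_nonneg: "\<alpha> \<ge> 0" and w: "w \<le> M * (\<alpha> + \<delta>)" and M: "M > 0"
    and eq: "gv = (complex_of_real \<alpha> + 1 - z) * gu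
          - complex_of_real (1/c) *
              (1 - complex_of_real lam / (complex_of_real lam - \<i> * complex_of_real (c * k))) * gw"
  shows "w * (cmod gu)\<^sup>2 \<le> 2*M/\<delta> * ((cmod gv)\<^sup>2 + (cmod (gw - gu))\<^sup>2)"
proof -
  define t where "t = cmod gu"
  define p where "p = cmod gv + cmod (gw - gu)"
  define e where "e = \<alpha> + \<delta>"
  have d_pos: "\<delta> > 0" unfolding d using c by (rule spectral_margin_pos)
  have e_ge: "e \<ge> \<delta>" unfolding e_def using \<alpha>_nonneg by simp
  have et: "e * t \<le> p" unfolding e_def t_def p_def by (rule symbol_absorption[OF c lam d z eq])
  have t_nonneg: "t \<ge> 0" and p_nonneg: "p \<ge> 0" unfolding t_def p_def by simp_all
  have "(e * t)\<^sup>2 \<le> p\<^sup>2" using et t_nonneg e_ge d_pos by (intro power_mono) auto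
  then have "e * (e * t\<^sup>2) \<le> p\<^sup>2" by (simp add: power2_eq_square mult_ac)
  then have "\<delta> * (e * t\<^sup>2) \<le> p\<^sup>2"
    using e_ge t_nonneg d_pos by (smt (verit) mult_right_mono zero_le_power2 mult_nonneg_nonneg)
  then have et2: "e * t\<^sup>2 \<le> p\<^sup>2 / \<delta>" using d_pos by (simp add: field_simps)
  have "w * t\<^sup>2 \<le> M * e * t\<^sup>2" using w unfolding e_def by (intro mult_right_mono) auto
  also have "\<dots> = M * (e * t\<^sup>2)" by simp
  also have "\<dots> \<le> M * (p\<^sup>2 / \<delta>)" using M et2 by (intro mult_left_mono) auto
  also have "\<dots> \<le> M * (2 * ((cmod gv)\<^sup>2 + (cmod (gw - gu))\<^sup>2) / \<delta>)"
    using M d_pos sum_squares_bound[of "cmod gv" "cmod (gw - gu)"] unfolding p_def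
    by (intro mult_left_mono divide_right_mono) (auto simp: power2_sum)
  finally show ?thesis unfolding t_def by (simp add: field_simps)
qed

text \<open>Energy form of the estimate: integrating the pointwise symbol bound and applying
  Plancherel to \<open>v\<close> and to \<open>q = f'(u_c) u\<close> (whose transform is \<open>w^ - u^\<close>).\<close>
lemma resolvent_energy_estimate:
  fixes \<alpha> f' uc :: "real \<Rightarrow> real" and c lam m M \<delta> :: real and z :: complex
    and u v :: "real \<Rightarrow> complex"
  assumes c: "c > 1" and lam: "lam > 0" and d: "\<delta> = (1 - 1/c)/2" and z: "Re z \<le> \<delta>"
    and \<alpha>_nonneg: "\<And>k. \<alpha> k \<ge> 0" and M: "M > 0"
    and weight: "\<And>k. (1 + k\<^sup>2) powr (m/2) \<le> M * (\<alpha> k + \<delta>)"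
    and eq: "A_minus_z_eq \<alpha> c f' uc lam z u v"
  shows "(\<integral>k. (1 + k\<^sup>2) powr (m/2) * (cmod (fourier u k))\<^sup>2 \<partial>lborel)
           \<le> 4*pi*M/\<delta> * ((L2e_norm f' uc u)\<^sup>2 + (L2_norm v)\<^sup>2)"
proof -
  obtain gu gw gv where fu: "fourier_L2 u gu"
    and fw: "fourier_L2 (\<lambda>x. (1 + complex_of_real (f' (uc x))) * u x) gw"
    and fv: "fourier_L2 v gv"
    and ae: "AE k in lborel. gv k =
          (complex_of_real (\<alpha> k) + 1 - z) * gu k
          - complex_of_real (1/c) *
              (1 - complex_of_real lam / (complex_of_real lam - \<i> * complex_of_real (c * k))) * gw k"
    using eq unfolding A_minus_z_eq_def by blast
  have d_pos: "\<delta> > 0" unfolding d using c by (rule spectral_margin_pos)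
  define Ev where "Ev = (\<integral>x. (cmod (v x))\<^sup>2 \<partial>lborel)"
  define Ee where "Ee = (\<integral>x. (f' (uc x))\<^sup>2 * (cmod (u x))\<^sup>2 \<partial>lborel)"
  have fq: "fourier_L2 (\<lambda>x. (1 + complex_of_real (f' (uc x))) * u x - u x) (\<lambda>k. gw k - gu k)"
    by (rule fourier_L2_diff[OF fw fu])
  have q_sq: "(cmod ((1 + complex_of_real (f' (uc x))) * u x - u x))\<^sup>2 = (f' (uc x))\<^sup>2 * (cmod (u x))\<^sup>2" for x
    by (simp add: algebra_simps norm_mult power_mult_distrib)
  have bound_q: "(\<integral>k. (cmod (gw k - gu k))\<^sup>2 \<partial>lborel) \<le> 2*pi*Ee"
    using fourier_L2_energy_bound[OF fq] unfolding q_sq Ee_def .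
  have bound_v: "(\<integral>k. (cmod (gv k))\<^sup>2 \<partial>lborel) \<le> 2*pi*Ev"
    using fourier_L2_energy_bound[OF fv] unfolding Ev_def .
  have sq_v: "integrable lborel (\<lambda>k. (cmod (gv k))\<^sup>2)"
    and sq_q: "integrable lborel (\<lambda>k. (cmod (gw k - gu k))\<^sup>2)"
    using fv fq unfolding fourier_L2_def by (auto dest: is_L2_sq)
  have [measurable]: "fourier u \<in> borel_measurable borel"
    using fourier_representative(1)[OF fu] unfolding fourier_L2_def by (auto dest: is_L2_meas)
  define bnd where "bnd = (\<lambda>k. 2*M/\<delta> * ((cmod (gv k))\<^sup>2 + (cmod (gw k - gu k))\<^sup>2))"
  have bnd_int: "integrable lborel bnd"
    unfolding bnd_def using sq_v sq_q by simp
  have pointwise: "AE k in lborel. (1 + k\<^sup>2) powr (m/2) * (cmod (fourier u k))\<^sup>2 \<le> bnd k"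
    using ae fourier_representative(2)[OF fu]
  proof eventually_elim
    case (elim k)
    show ?case unfolding bnd_def elim(2)
      by (rule symbol_pointwise_estimate[OF c lam d z \<alpha>_nonneg weight M elim(1)])
  qed
  have lhs_int: "integrable lborel (\<lambda>k. (1 + k\<^sup>2) powr (m/2) * (cmod (fourier u k))\<^sup>2)"
    by (rule Bochner_Integration.integrable_bound[OF bnd_int]) (use pointwise in auto)
  have "(\<integral>k. (1 + k\<^sup>2) powr (m/2) * (cmod (fourier u k))\<^sup>2 \<partial>lborel) \<le> (\<integral>k. bnd k \<partial>lborel)"
    by (rule integral_mono_AE[OF lhs_int bnd_int pointwise])
  also have "\<dots> = 2*M/\<delta> * ((\<integral>k. (cmod (gv k))\<^sup>2 \<partial>lborel) + (\<integral>k. (cmod (gw k - gu k))\<^sup>2 \<partial>lborel))"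
    unfolding bnd_def using sq_v sq_q by simp
  also have "\<dots> \<le> 2*M/\<delta> * (2*pi*Ev + 2*pi*Ee)"
    using bound_v bound_q M d_pos by (intro mult_left_mono add_mono) auto
  also have "\<dots> = 4*pi*M/\<delta> * ((L2e_norm f' uc u)\<^sup>2 + (L2_norm v)\<^sup>2)"
    unfolding L2e_norm_def L2_norm_def Ee_def[symmetric] Ev_def[symmetric]
    by (simp add: Ee_def Ev_def integral_nonneg_AE algebra_simps)
  finally show ?thesis .
qed

lemma resolvent_sobolev_estimate:
  fixes \<alpha> f' uc :: "real \<Rightarrow> real" and c lam m M \<delta> :: real and z :: complex
    and u v :: "real \<Rightarrow> complex"
  assumes c: "c > 1" and lam: "lam > 0" and d: "\<delta> = (1 - 1/c)/2" and z: "Re z \<le> \<delta>"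
    and \<alpha>_nonneg: "\<And>k. \<alpha> k \<ge> 0" and M: "M > 0"
    and weight: "\<And>k. (1 + k\<^sup>2) powr (m/2) \<le> M * (\<alpha> k + \<delta>)"
    and eq: "A_minus_z_eq \<alpha> c f' uc lam z u v"
  shows "sobolev_norm (m/2) u \<le> sqrt (4*pi*M/\<delta>) * (L2e_norm f' uc u + L2_norm v)"
proof -
  have d_pos: "\<delta> > 0" unfolding d using c by (rule spectral_margin_pos)
  have norms_nonneg: "L2e_norm f' uc u \<ge> 0" "L2_norm v \<ge> 0"
    unfolding L2e_norm_def L2_norm_def by simp_all
  have "sobolev_norm (m/2) u \<le> sqrt (4*pi*M/\<delta> * ((L2e_norm f' uc u)\<^sup>2 + (L2_norm v)\<^sup>2))"
    unfolding sobolev_norm_def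
    using resolvent_energy_estimate[OF c lam d z \<alpha>_nonneg M weight eq] by simp
  also have "\<dots> = sqrt (4*pi*M/\<delta>) * sqrt ((L2e_norm f' uc u)\<^sup>2 + (L2_norm v)\<^sup>2)"
    by (rule real_sqrt_mult)
  also have "\<dots> \<le> sqrt (4*pi*M/\<delta>) * (L2e_norm f' uc u + L2_norm v)"
    using sqrt_add_le_add_sqrt[of "(L2e_norm f' uc u)\<^sup>2" "(L2_norm v)\<^sup>2"] norms_nonneg M d_pos
    by (intro mult_left_mono) auto
  finally show ?thesis .
qed

theorem mainTheorem11:
  fixes f f' :: "real \<Rightarrow> real" and \<alpha> :: "real \<Rightarrow> real" and m a b c :: real
    and uc :: "real \<Rightarrow> real"
  assumes f_deriv: "\<And>x. (f has_real_derivative f' x) (at x)"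
    and f'_cont: "continuous_on UNIV f'"
    and f0: "f 0 = 0" and f'0: "f' 0 = 0"
    and \<alpha>_nonneg: "\<And>k. \<alpha> k \<ge> 0"
    and \<alpha>_locbdd: "\<And>K. compact K \<Longrightarrow> bounded (\<alpha> ` K)"
    and m_ge: "m \<ge> 1" and a_pos: "a > 0" and b_pos: "b > 0"
    and \<alpha>_growth: "\<exists>R. \<forall>k. \<bar>k\<bar> \<ge> R \<longrightarrow> a * \<bar>k\<bar> powr m \<le> \<alpha> k \<and> \<alpha> k \<le> b * \<bar>k\<bar> powr m"
    and c_gt: "c > 1"
    and uc_H: "sobolev m (\<lambda>x. complex_of_real (uc x))"
    and uc_eq: "profile_eq \<alpha> c f uc"
    and uc_decay: "(uc \<longlongrightarrow> 0) at_infinity"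
  shows "\<exists>lam0 > 0. \<exists>C > 0. \<forall>lam z u v.
           0 < lam \<and> lam < lam0 \<and> Re z \<le> (1 - 1/c) / 2 \<and>
           is_L2 v \<and> sobolev m u \<and> A_minus_z_eq \<alpha> c f' uc lam z u v \<longrightarrow>
           sobolev_norm (m/2) u \<le> C * (L2e_norm f' uc u + L2_norm v)"
proof -
  define \<delta> where "\<delta> = (1 - 1/c)/2"
  have \<delta>_pos: "\<delta> > 0" unfolding \<delta>_def using c_gt by (rule spectral_margin_pos)
  obtain R where "\<forall>k. \<bar>k\<bar> \<ge> R \<longrightarrow> a * \<bar>k\<bar> powr m \<le> \<alpha> k \<and> \<alpha> k \<le> b * \<bar>k\<bar> powr m"
    using \<alpha>_growth by blast
  then obtain M where M: "M > 0" and weight: "\<And>k. (1 + k\<^sup>2) powr (m/2) \<le> M * (\<alpha> k + \<delta>)"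
    using sobolev_weight_bound[of m a \<delta> \<alpha> R] m_ge a_pos \<delta>_pos \<alpha>_nonneg by auto
  have estimate: "\<forall>lam z u v. 0 < lam \<and> lam < 1 \<and> Re z \<le> (1 - 1/c) / 2 \<and>
           is_L2 v \<and> sobolev m u \<and> A_minus_z_eq \<alpha> c f' uc lam z u v \<longrightarrow>
           sobolev_norm (m/2) u \<le> sqrt (4*pi*M/\<delta>) * (L2e_norm f' uc u + L2_norm v)"
    using resolvent_sobolev_estimate[OF c_gt _ \<delta>_def _ \<alpha>_nonneg M weight]
    unfolding \<delta>_def by blast
  moreover have "sqrt (4*pi*M/\<delta>) > 0" using M \<delta>_pos by simp
  ultimately show ?thesis using zero_less_one by blast
qed

end
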